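(* Suppose the expanded system is time-invariant. Let $\tilde\beta\in(0,1)$ and $K\in\mathbb{R}^{m\times n}$. If there exist symmetric positive definite $P^{(k)}\in\mathbb{R}^{\tilde n\times\tilde n}$ for $k\in\{1,\dots,N\}$ and $G\in\mathbb{R}^{\tilde n\times\tilde n}$ such that $$\begin{bmatrix}\tilde\beta^2P^{(k)} & \mathcal{C}(F^{(k)}(K))^\top G\\ G^\top\mathcal{C}(F^{(k)}(K)) & G^\top+G-P^{(k)}\end{bmatrix}\succeq0\quad\text{for all }k\in\{1,\dots,N\},$$ then the expanded system $\tilde x_{t+1}=\mathcal{C}(F(\tilde\theta_t,K))\tilde x_t$ with this gain $K$ is exponentially robustly stable with rate $\tilde\beta$.
   Context: Let $n,m,N$ be positive integers, $\tilde n=n(n+1)/2$. $\mathrm{vec}$ stacks columns; $\mathrm{vech}(X)$ stacks columnwise the entries on and below the diagonal of square $X$. $E_e\in\mathbb{R}^{\tilde n\times n^2}$ satisfies $E_e\mathrm{vec}(X)=\mathrm{vech}(X)$ for all $X\in\mathbb{R}^{n\times n}$, $D\in\mathbb{R}^{n^2\times\tilde n}$ satisfies $D\mathrm{vech}(Y)=\mathrm{vec}(Y)$ for all symmetric $Y$, and $\mathcal{C}(Y):=E_eYD$. Given symmetric $M^{(1)},\dots,M^{(N)}\in\mathbb{R}^{n(n+m)\times n(n+m)}$ (vertices of the second moment of $\mathrm{vec}([A_t,B_t])$ of an SMP system $x_{t+1}=A_t(\theta_t)x_t+B_t(\theta_t)u_t$ with $\mathrm{E}[v_tv_t^\top|\theta]=\sum_k[\phi(\theta_t)]_kM^{(k)}$,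 $\phi:\mathbb{S}_\theta\to\mathbb{P}_N=\{\varphi\in\mathbb{R}^N:\varphi_k\ge0,\sum\varphi_k=1\}$), partition $M^{(k)}$ into blocks $M^{(k)}_{i,j}\in\mathbb{R}^{n\times n}$, $i,j\le n+m$. Column $n(j-1)+i$ of $F^{(k)}_{aa}\in\mathbb{R}^{n^2\times n^2}$ is $\mathrm{vec}(M^{(k)}_{i,j})$; column $m(j-1)+i'$ of $F^{(k)}_{ab}\in\mathbb{R}^{n^2\times nm}$ is $\mathrm{vec}(M^{(k)}_{n+i',j})$; column $n(j'-1)+i$ of $F^{(k)}_{ba}\in\mathbb{R}^{n^2\times nm}$ is $\mathrm{vec}(M^{(k)}_{i,n+j'})$; column $m(j'-1)+i'$ of $F^{(k)}_{bb}\in\mathbb{R}^{n^2\times m^2}$ is $\mathrm{vec}(M^{(k)}_{n+i',n+j'})$ ($i,j\le n$, $i',j'\le m$). $F^{(k)}(K):=F^{(k)}_{aa}-F^{(k)}_{ab}(I_n\otimes K)-F^{(k)}_{ba}(K\otimes I_n)+F^{(k)}_{bb}(K\otimes K)$, $F(\tilde\theta,K):=\sum_{k=1}^N[\tilde\theta]_kF^{(k)}(K)$. The expanded system is $\tilde x_{t+1}=\mathcal{C}(F(\tilde\theta_t,K))\tilde x_t$, $\tilde x_t\in\mathbb{R}^{\tilde n}$, $\tilde\theta_t\in\tilde{\mathbb{S}}:=\phi(\mathbb{S}_\theta)\subseteq\mathbb{P}_N$. Time-invariant means $\tilde\theta_t=\tilde\theta$ is constant in $t$ (so parameter sequences are constant).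 Exponentially robustly stable with rate $\tilde\beta$: there is $\tilde\alpha\in(0,\infty)$ with $\|\tilde x_t\|\le\tilde\alpha\|\tilde x_0\|\tilde\beta^t$ for all $\tilde x_0\in\mathbb{R}^{\tilde n}$, all admissible parameter sequences in $\tilde{\mathbb{S}}$, and all $t\ge0$. *)

theory Defs
  imports "Jordan_Normal_Form.Matrix"
begin

text \<open>Matrices are Jordan_Normal_Form matrices (real mat) with explicit dimensions;
  all indices are 0-based (paper index i corresponds to i-1 here).\<close>

definition vecm :: "real mat \<Rightarrow> real vec" where
  "vecm X = vec (dim_row X * dim_col X) (\<lambda>r. X $$ (r mod dim_row X, r div dim_row X))"

definition vech :: "real mat \<Rightarrow> real vec" where
  "vech X = vec_of_list (concat (map (\<lambda>j. map (\<lambda>i. X $$ (i, j)) [j..<dim_row X]) [0..<dim_row X]))"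

definition kron :: "real mat \<Rightarrow> real mat \<Rightarrow> real mat" where
  "kron A B = mat (dim_row A * dim_row B) (dim_col A * dim_col B)
     (\<lambda>(i, j). A $$ (i div dim_row B, j div dim_col B) * B $$ (i mod dim_row B, j mod dim_col B))"

definition blk :: "nat \<Rightarrow> real mat \<Rightarrow> nat \<Rightarrow> nat \<Rightarrow> real mat" where
  "blk n M i j = mat n n (\<lambda>(a, b). M $$ (n * i + a, n * j + b))"

definition Faa :: "nat \<Rightarrow> real mat \<Rightarrow> real mat" where
  "Faa n M = mat (n^2) (n^2) (\<lambda>(r, c). vecm (blk n M (c mod n) (c div n)) $ r)"

definition Fab :: "nat \<Rightarrow> nat \<Rightarrow> real mat \<Rightarrow> real mat" where
  "Fab n m M = mat (n^2) (n * m) (\<lambda>(r, c). vecm (blk n M (n + c mod m) (c div m)) $ r)"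

definition Fba :: "nat \<Rightarrow> nat \<Rightarrow> real mat \<Rightarrow> real mat" where
  "Fba n m M = mat (n^2) (n * m) (\<lambda>(r, c). vecm (blk n M (c mod n) (n + c div n)) $ r)"

definition Fbb :: "nat \<Rightarrow> nat \<Rightarrow> real mat \<Rightarrow> real mat" where
  "Fbb n m M = mat (n^2) (m^2) (\<lambda>(r, c). vecm (blk n M (n + c mod m) (n + c div m)) $ r)"

definition Fk :: "nat \<Rightarrow> nat \<Rightarrow> real mat \<Rightarrow> real mat \<Rightarrow> real mat" where
  "Fk n m M K = Faa n M - Fab n m M * kron (1\<^sub>m n) K - Fba n m M * kron K (1\<^sub>m n)
               + Fbb n m M * kron K K"

definition Fth :: "nat \<Rightarrow> nat \<Rightarrow> nat \<Rightarrow> (nat \<Rightarrow> real mat) \<Rightarrow> real vec \<Rightarrow> real mat \<Rightarrow> real mat" where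
  "Fth n m N M th K = mat (n^2) (n^2) (\<lambda>ij. \<Sum>k<N. th $ k * Fk n m (M k) K $$ ij)"

definition Cop :: "real mat \<Rightarrow> real mat \<Rightarrow> real mat \<Rightarrow> real mat" where
  "Cop Ee D Y = Ee * Y * D"

definition simplex :: "nat \<Rightarrow> real vec set" where
  "simplex N = {v \<in> carrier_vec N. (\<forall>k<N. 0 \<le> v $ k) \<and> (\<Sum>k<N. v $ k) = 1}"

definition symmetric_mat :: "real mat \<Rightarrow> bool" where
  "symmetric_mat A \<longleftrightarrow> A\<^sup>T = A"

definition psd :: "nat \<Rightarrow> real mat \<Rightarrow> bool" where
  "psd d A \<longleftrightarrow> A \<in> carrier_mat d d \<and> symmetric_mat A \<and> (\<forall>x \<in> carrier_vec d. 0 \<le> x \<bullet> (A *\<^sub>v x))"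

definition pd :: "nat \<Rightarrow> real mat \<Rightarrow> bool" where
  "pd d A \<longleftrightarrow> A \<in> carrier_mat d d \<and> symmetric_mat A \<and>
     (\<forall>x \<in> carrier_vec d. x \<noteq> 0\<^sub>v d \<longrightarrow> 0 < x \<bullet> (A *\<^sub>v x))"

definition enorm :: "real vec \<Rightarrow> real" where
  "enorm x = sqrt (x \<bullet> x)"

end

theory Submission
  imports Defs "HOL-Analysis.Function_Topology"
begin

text \<open>
  The parameter-dependent Lyapunov function V(x) = x' P(theta) x with
  P(theta) = sum_k theta_k P^(k) certifies stability. The closed-loop matrix
  A(theta) = C(F(theta, K)) is the theta-weighted combination of the vertex matrices
  A_k = C(F^(k)(K)), because C and F are linear in theta. Testing the k-th LMI with the
  vector (x, -A(theta) x) and averaging over k with the weights theta_k, all terms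
  containing G cancel and what remains is V(A(theta) x) <= beta^2 V(x). Being a convex
  combination of finitely many positive definite matrices, P(theta) gives
  c |x|^2 <= V(x) <= C |x|^2 uniformly in theta, hence |x_t| <= sqrt(C/c) beta^t |x_0|.
\<close>

lemma scalar_prod_mult_mat_vec_eq_sum:
  assumes "A \<in> carrier_mat r c" "y \<in> carrier_vec r" "u \<in> carrier_vec c"
  shows "y \<bullet> (A *\<^sub>v u) = (\<Sum>i<r. \<Sum>j<c. y $ i * A $$ (i, j) * u $ j)"
  using assms
  by (auto simp: scalar_prod_def atLeast0LessThan sum_distrib_left mult.assoc intro!: sum.cong)

lemma scalar_prod_self_eq_sum:
  assumes "(x :: real vec) \<in> carrier_vec d"
  shows "x \<bullet> x = (\<Sum>i<d. (x $ i)\<^sup>2)"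
  using assms by (simp add: scalar_prod_def atLeast0LessThan power2_eq_square)

lemma scalar_prod_self_nonneg: "(x :: real vec) \<in> carrier_vec d \<Longrightarrow> 0 \<le> x \<bullet> x"
  by (simp add: scalar_prod_self_eq_sum sum_nonneg)

lemma smult_mat_mult_vec:
  assumes "(A :: real mat) \<in> carrier_mat r c" "x \<in> carrier_vec c"
  shows "(b \<cdot>\<^sub>m A) *\<^sub>v x = b \<cdot>\<^sub>v (A *\<^sub>v x)"
  using assms by (auto simp: scalar_prod_def sum_distrib_left mult.assoc intro!: eq_vecI)

lemma scalar_prod_transpose_mult_vec:
  assumes "(A :: real mat) \<in> carrier_mat r c" "x \<in> carrier_vec c" "y \<in> carrier_vec r"
  shows "x \<bullet> (A\<^sup>T *\<^sub>v y) = y \<bullet> (A *\<^sub>v x)"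
  using assms
  by (metis comm_scalar_prod mult_mat_vec_carrier transpose_carrier_mat transpose_vec_mult_scalar)

text \<open>
  Vectors of dimension d are viewed as functions nat => real vanishing from d on; in the
  product topology their unit sphere is then a closed subset of a compact box.
\<close>

lemma compact_box_inter_unit_sphere:
  fixes d :: nat
  shows "compact (PiE UNIV (\<lambda>i. if i < d then {-1..1} else {0 :: real}) \<inter> {f. (\<Sum>i<d. (f i)\<^sup>2) = 1})"
proof (rule compact_Int_closed)
  have "compactin (product_topology (\<lambda>_. euclidean) UNIV)
      (PiE UNIV (\<lambda>i. if i < d then {-1..1} else {0 :: real}))"
    by (subst compactin_PiE) auto
  then show "compact (PiE UNIV (\<lambda>i. if i < d then {-1..1} else {0 :: real}))"
    by (simp add: euclidean_product_topology compactin_euclidean_iff)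
  show "closed {f :: nat \<Rightarrow> real. (\<Sum>i<d. (f i)\<^sup>2) = 1}"
    by (intro closed_Collect_eq continuous_on_sum continuous_on_power
        continuous_on_product_coordinates continuous_on_const)
qed

lemma quadratic_form_attains_min_on_unit_sphere:
  fixes P :: "real mat"
  assumes P: "P \<in> carrier_mat d d" and "0 < d"
  obtains u where "u \<in> carrier_vec d" "u \<bullet> u = 1"
    "\<And>x. x \<in> carrier_vec d \<Longrightarrow> x \<bullet> x = 1 \<Longrightarrow> u \<bullet> (P *\<^sub>v u) \<le> x \<bullet> (P *\<^sub>v x)"
proof -
  define S where
    "S = PiE UNIV (\<lambda>i. if i < d then {-1..1} else {0 :: real}) \<inter> {f. (\<Sum>i<d. (f i)\<^sup>2) = 1}"
  define q where "q f = (\<Sum>i<d. \<Sum>j<d. f i * P $$ (i, j) * f j)" for f :: "nat \<Rightarrow> real"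
  have "compact S"
    unfolding S_def by (rule compact_box_inter_unit_sphere)
  have "(\<Sum>i<d. (if i = 0 then 1 else 0 :: real)\<^sup>2) = (\<Sum>i<d. if i = 0 then 1 else 0)"
    by (intro sum.cong) auto
  with \<open>0 < d\<close> have "(\<lambda>i. if i = 0 then 1 else 0) \<in> S"
    by (auto simp: S_def)
  then have "S \<noteq> {}" by blast
  have "continuous_on UNIV q"
    unfolding q_def
    by (intro continuous_on_sum continuous_on_mult continuous_on_const
        continuous_on_product_coordinates)
  then have "continuous_on S q"
    by (rule continuous_on_subset) simp
  then obtain f where f: "f \<in> S" "\<And>g. g \<in> S \<Longrightarrow> q f \<le> q g"
    using continuous_attains_inf[OF \<open>compact S\<close> \<open>S \<noteq> {}\<close>] by blast
  have q_vec: "q g = x \<bullet> (P *\<^sub>v x)" if "x \<in> carrier_vec d" "\<forall>i<d. g i = x $ i" for g x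
    using that P by (simp add: q_def scalar_prod_mult_mat_vec_eq_sum)
  show thesis
  proof
    show "vec d f \<in> carrier_vec d" by simp
    show "vec d f \<bullet> vec d f = 1"
      using f(1) by (simp add: S_def scalar_prod_self_eq_sum)
    fix x :: "real vec" assume x: "x \<in> carrier_vec d" "x \<bullet> x = 1"
    define g where "g i = (if i < d then x $ i else 0)" for i
    have "(x $ i)\<^sup>2 \<le> (\<Sum>j<d. (x $ j)\<^sup>2)" if "i < d" for i
      using that by (intro member_le_sum) auto
    then have "\<bar>x $ i\<bar> \<le> 1" if "i < d" for i
      using x that by (simp add: scalar_prod_self_eq_sum flip: abs_square_le_1)
    then have "g \<in> S"
      using x by (fastforce simp: S_def g_def scalar_prod_self_eq_sum abs_le_iff)
    then have "q f \<le> q g"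
      by (rule f(2))
    moreover have "q f = vec d f \<bullet> (P *\<^sub>v vec d f)" "q g = x \<bullet> (P *\<^sub>v x)"
      using x by (auto intro!: q_vec simp: g_def)
    ultimately show "vec d f \<bullet> (P *\<^sub>v vec d f) \<le> x \<bullet> (P *\<^sub>v x)"
      by simp
  qed
qed

lemma quadratic_form_lower_bound_of_unit_sphere:
  fixes P :: "real mat"
  assumes P: "P \<in> carrier_mat d d" and x: "x \<in> carrier_vec d"
    and unit: "\<And>u. u \<in> carrier_vec d \<Longrightarrow> u \<bullet> u = 1 \<Longrightarrow> c \<le> u \<bullet> (P *\<^sub>v u)"
  shows "c * (x \<bullet> x) \<le> x \<bullet> (P *\<^sub>v x)"
proof (cases "x = 0\<^sub>v d")
  case True
  with P show ?thesis by simp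
next
  case False
  have "0 < x \<bullet> x"
    using x False by (auto simp: scalar_prod_self_eq_sum vec_eq_iff intro!: sum_pos2)
  define u where "u = (1 / sqrt (x \<bullet> x)) \<cdot>\<^sub>v x"
  have "u \<bullet> u = 1"
    using x \<open>0 < x \<bullet> x\<close> by (simp add: u_def)
  moreover have "u \<bullet> (P *\<^sub>v u) = (x \<bullet> (P *\<^sub>v x)) / (x \<bullet> x)"
    using P x \<open>0 < x \<bullet> x\<close> by (simp add: u_def mult_mat_vec[OF P])
  ultimately have "c \<le> (x \<bullet> (P *\<^sub>v x)) / (x \<bullet> x)"
    using unit[of u] x by (simp add: u_def)
  with \<open>0 < x \<bullet> x\<close> show ?thesis
    by (simp add: pos_le_divide_eq mult.commute)
qed

lemma pd_quadratic_form_bounds: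
  assumes "pd d P"
  shows "\<exists>c>0. \<exists>C>0. \<forall>x \<in> carrier_vec d. c * (x \<bullet> x) \<le> x \<bullet> (P *\<^sub>v x) \<and> x \<bullet> (P *\<^sub>v x) \<le> C * (x \<bullet> x)"
proof (cases "d = 0")
  case True
  then have "x \<bullet> x = 0 \<and> x \<bullet> (P *\<^sub>v x) = 0" if "x \<in> carrier_vec d" for x
    using that by (simp add: scalar_prod_def)
  then show ?thesis
    by (intro exI[of _ 1] conjI) auto
next
  case False
  have P: "P \<in> carrier_mat d d" and pos: "\<And>x. x \<in> carrier_vec d \<Longrightarrow> x \<noteq> 0\<^sub>v d \<Longrightarrow> 0 < x \<bullet> (P *\<^sub>v x)"
    using assms by (auto simp: pd_def)
  obtain u where u: "u \<in> carrier_vec d" "u \<bullet> u = 1"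
    and u_min: "\<And>x. x \<in> carrier_vec d \<Longrightarrow> x \<bullet> x = 1 \<Longrightarrow> u \<bullet> (P *\<^sub>v u) \<le> x \<bullet> (P *\<^sub>v x)"
    using quadratic_form_attains_min_on_unit_sphere[OF P] False by blast
  obtain v where "v \<in> carrier_vec d" "v \<bullet> v = 1"
    and v_min: "\<And>x. x \<in> carrier_vec d \<Longrightarrow> x \<bullet> x = 1 \<Longrightarrow> v \<bullet> (- P *\<^sub>v v) \<le> x \<bullet> (- P *\<^sub>v x)"
    by (rule quadratic_form_attains_min_on_unit_sphere[of "- P" d]) (use P False in auto)
  have "u \<noteq> 0\<^sub>v d"
    using u by auto
  then have c: "0 < u \<bullet> (P *\<^sub>v u)"
    using pos u by blast
  define C where "C = max 1 (- (v \<bullet> (- P *\<^sub>v v)))"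
  have "u \<bullet> (P *\<^sub>v u) * (x \<bullet> x) \<le> x \<bullet> (P *\<^sub>v x) \<and> x \<bullet> (P *\<^sub>v x) \<le> C * (x \<bullet> x)"
    if x: "x \<in> carrier_vec d" for x
  proof
    show "u \<bullet> (P *\<^sub>v u) * (x \<bullet> x) \<le> x \<bullet> (P *\<^sub>v x)"
      using quadratic_form_lower_bound_of_unit_sphere[OF P x u_min] .
    have "v \<bullet> (- P *\<^sub>v v) * (x \<bullet> x) \<le> x \<bullet> (- P *\<^sub>v x)"
      using P by (intro quadratic_form_lower_bound_of_unit_sphere[OF _ x v_min]) auto
    also have "x \<bullet> (- P *\<^sub>v x) = - (x \<bullet> (P *\<^sub>v x))"
      using P x by simp
    finally have "x \<bullet> (P *\<^sub>v x) \<le> - (v \<bullet> (- P *\<^sub>v v)) * (x \<bullet> x)"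
      by simp
    also have "\<dots> \<le> C * (x \<bullet> x)"
      unfolding C_def using x scalar_prod_self_nonneg by (intro mult_right_mono) auto
    finally show "x \<bullet> (P *\<^sub>v x) \<le> C * (x \<bullet> x)" .
  qed
  moreover have "0 < C"
    by (simp add: C_def)
  ultimately show ?thesis
    using c by blast
qed

lemma pd_family_uniform_quadratic_form_bounds:
  fixes N :: nat
  assumes "\<forall>k<N. pd d (P k)"
  shows "\<exists>c>0. \<exists>C>0. \<forall>k<N. \<forall>x \<in> carrier_vec d.
           c * (x \<bullet> x) \<le> x \<bullet> (P k *\<^sub>v x) \<and> x \<bullet> (P k *\<^sub>v x) \<le> C * (x \<bullet> x)"
proof -
  have "\<forall>k. \<exists>c C. k < N \<longrightarrow> 0 < c \<and> 0 < C \<and> (\<forall>x \<in> carrier_vec d.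
          c * (x \<bullet> x) \<le> x \<bullet> (P k *\<^sub>v x) \<and> x \<bullet> (P k *\<^sub>v x) \<le> C * (x \<bullet> x))"
    using assms pd_quadratic_form_bounds by blast
  then obtain lo hi where lo_hi: "\<And>k. k < N \<Longrightarrow> 0 < lo k \<and> 0 < hi k \<and> (\<forall>x \<in> carrier_vec d.
          lo k * (x \<bullet> x) \<le> x \<bullet> (P k *\<^sub>v x) \<and> x \<bullet> (P k *\<^sub>v x) \<le> hi k * (x \<bullet> x))"
    by metis
  define c where "c = Min (insert 1 (lo ` {..<N}))"
  define C where "C = Max (insert 1 (hi ` {..<N}))"
  have "0 < c"
    unfolding c_def using lo_hi by (subst Min_gr_iff) auto
  have "0 < C"
    unfolding C_def by (subst Max_gr_iff) auto
  have "c \<le> lo k" "hi k \<le> C" if "k < N" for k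
    using that by (auto simp: c_def C_def)
  then have "c * (x \<bullet> x) \<le> lo k * (x \<bullet> x)" "hi k * (x \<bullet> x) \<le> C * (x \<bullet> x)"
    if "k < N" "x \<in> carrier_vec d" for k x
    using that scalar_prod_self_nonneg by (auto intro: mult_right_mono)
  with lo_hi \<open>0 < c\<close> \<open>0 < C\<close> show ?thesis
    by (meson order_trans)
qed

definition mat_lincomb :: "nat \<Rightarrow> nat \<Rightarrow> nat \<Rightarrow> (nat \<Rightarrow> real) \<Rightarrow> (nat \<Rightarrow> real mat) \<Rightarrow> real mat"
  where "mat_lincomb r c N w A = mat r c (\<lambda>ij. \<Sum>k<N. w k * A k $$ ij)"

lemma mat_lincomb_carrier [simp]: "mat_lincomb r c N w A \<in> carrier_mat r c"
  by (simp add: mat_lincomb_def)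

lemma scalar_prod_mat_lincomb_mult_vec:
  assumes "\<forall>k<N. A k \<in> carrier_mat r c" "y \<in> carrier_vec r" "u \<in> carrier_vec c"
  shows "y \<bullet> (mat_lincomb r c N w A *\<^sub>v u) = (\<Sum>k<N. w k * (y \<bullet> (A k *\<^sub>v u)))"
proof -
  have "y \<bullet> (mat_lincomb r c N w A *\<^sub>v u)
      = (\<Sum>i<r. \<Sum>j<c. \<Sum>k<N. w k * (y $ i * A k $$ (i, j) * u $ j))"
    unfolding scalar_prod_mult_mat_vec_eq_sum[OF mat_lincomb_carrier assms(2,3)]
    by (simp add: mat_lincomb_def sum_distrib_left sum_distrib_right mult_ac)
  also have "\<dots> = (\<Sum>k<N. w k * (\<Sum>i<r. \<Sum>j<c. y $ i * A k $$ (i, j) * u $ j))"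
    by (simp add: sum_distrib_left sum.swap[of _ "{..<N}"])
  also have "\<dots> = (\<Sum>k<N. w k * (y \<bullet> (A k *\<^sub>v u)))"
    using assms by (auto simp: scalar_prod_mult_mat_vec_eq_sum intro!: sum.cong)
  finally show ?thesis .
qed

lemma index_mult_mat_triple:
  assumes "X \<in> carrier_mat a b" "Y \<in> carrier_mat b b'" "Z \<in> carrier_mat b' c" "i < a" "j < c"
  shows "(X * Y * Z) $$ (i, j) = row X i \<bullet> (Y *\<^sub>v col Z j)"
  using assms by (simp add: assoc_mult_mat[of X a b Y b' Z c] mult_mat_vec_def)

lemma mult_mat_lincomb:
  assumes "X \<in> carrier_mat a b" "\<forall>k<N. Y k \<in> carrier_mat b b'" "Z \<in> carrier_mat b' c"
  shows "X * mat_lincomb b b' N w Y * Z = mat_lincomb a c N w (\<lambda>k. X * Y k * Z)"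
proof (rule eq_matI)
  fix i j assume "i < dim_row (mat_lincomb a c N w (\<lambda>k. X * Y k * Z))"
    "j < dim_col (mat_lincomb a c N w (\<lambda>k. X * Y k * Z))"
  then have ij: "i < a" "j < c" by (auto simp: mat_lincomb_def)
  have "(X * mat_lincomb b b' N w Y * Z) $$ (i, j) = row X i \<bullet> (mat_lincomb b b' N w Y *\<^sub>v col Z j)"
    using assms ij by (intro index_mult_mat_triple) auto
  also have "\<dots> = (\<Sum>k<N. w k * (row X i \<bullet> (Y k *\<^sub>v col Z j)))"
    using assms ij by (intro scalar_prod_mat_lincomb_mult_vec) auto
  also have "\<dots> = mat_lincomb a c N w (\<lambda>k. X * Y k * Z) $$ (i, j)"
    using assms ij
    by (auto simp: mat_lincomb_def index_mult_mat_triple[OF assms(1) _ assms(3) ij]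
        simp del: index_mult_mat intro!: sum.cong)
  finally show "(X * mat_lincomb b b' N w Y * Z) $$ (i, j)
      = mat_lincomb a c N w (\<lambda>k. X * Y k * Z) $$ (i, j)" .
qed (use assms in \<open>auto simp: mat_lincomb_def\<close>)

lemma mat_lincomb_quadratic_form_bounds:
  assumes P: "\<forall>k<N. P k \<in> carrier_mat d d"
    and bounds: "\<forall>k<N. \<forall>x \<in> carrier_vec d.
           c * (x \<bullet> x) \<le> x \<bullet> (P k *\<^sub>v x) \<and> x \<bullet> (P k *\<^sub>v x) \<le> C * (x \<bullet> x)"
    and w: "\<forall>k<N. 0 \<le> w k" "(\<Sum>k<N. w k) = 1" and x: "x \<in> carrier_vec d"
  shows "c * (x \<bullet> x) \<le> x \<bullet> (mat_lincomb d d N w P *\<^sub>v x)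
    \<and> x \<bullet> (mat_lincomb d d N w P *\<^sub>v x) \<le> C * (x \<bullet> x)"
proof -
  have form: "x \<bullet> (mat_lincomb d d N w P *\<^sub>v x) = (\<Sum>k<N. w k * (x \<bullet> (P k *\<^sub>v x)))"
    by (rule scalar_prod_mat_lincomb_mult_vec[OF P x x])
  have "c * (x \<bullet> x) = (\<Sum>k<N. w k * (c * (x \<bullet> x)))"
    using w(2) by (simp flip: sum_distrib_right)
  also have "\<dots> \<le> (\<Sum>k<N. w k * (x \<bullet> (P k *\<^sub>v x)))"
    using bounds w(1) x by (intro sum_mono mult_left_mono) auto
  finally have lower: "c * (x \<bullet> x) \<le> (\<Sum>k<N. w k * (x \<bullet> (P k *\<^sub>v x)))" .
  have "(\<Sum>k<N. w k * (x \<bullet> (P k *\<^sub>v x))) \<le> (\<Sum>k<N. w k * (C * (x \<bullet> x)))"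
    using bounds w(1) x by (intro sum_mono mult_left_mono) auto
  also have "\<dots> = C * (x \<bullet> x)"
    using w(2) by (simp flip: sum_distrib_right)
  finally show ?thesis
    using lower form by simp
qed

lemma four_block_lmi_quadratic_form:
  fixes P A G :: "real mat"
  assumes P: "P \<in> carrier_mat d d" and A: "A \<in> carrier_mat d d" and G: "G \<in> carrier_mat d d"
    and u: "u \<in> carrier_vec d" and v: "v \<in> carrier_vec d"
  shows "(u @\<^sub>v v) \<bullet> (four_block_mat (b \<cdot>\<^sub>m P) (A\<^sup>T * G) (G\<^sup>T * A) (G\<^sup>T + G - P) *\<^sub>v (u @\<^sub>v v))
     = b * (u \<bullet> (P *\<^sub>v u)) + 2 * ((G *\<^sub>v v) \<bullet> (A *\<^sub>v u)) + 2 * (v \<bullet> (G *\<^sub>v v)) - v \<bullet> (P *\<^sub>v v)"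
proof -
  have "four_block_mat (b \<cdot>\<^sub>m P) (A\<^sup>T * G) (G\<^sup>T * A) (G\<^sup>T + G - P) *\<^sub>v (u @\<^sub>v v)
      = ((b \<cdot>\<^sub>m P) *\<^sub>v u + (A\<^sup>T * G) *\<^sub>v v) @\<^sub>v ((G\<^sup>T * A) *\<^sub>v u + (G\<^sup>T + G - P) *\<^sub>v v)"
    using assms by (intro four_block_mat_mult_vec) auto
  also have "\<dots> = (b \<cdot>\<^sub>v (P *\<^sub>v u) + A\<^sup>T *\<^sub>v (G *\<^sub>v v))
      @\<^sub>v (G\<^sup>T *\<^sub>v (A *\<^sub>v u) + (G\<^sup>T *\<^sub>v v + G *\<^sub>v v - P *\<^sub>v v))"
    using assms
    by (simp add: smult_mat_mult_vec add_mult_distrib_mat_vec[of "G\<^sup>T" d d G]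
        minus_mult_distrib_mat_vec[of "G\<^sup>T + G" d d P])
  finally show ?thesis
    using assms
    by (simp add: scalar_prod_append scalar_prod_add_distrib scalar_prod_minus_distrib
        scalar_prod_transpose_mult_vec comm_scalar_prod[of "A *\<^sub>v u" d "G *\<^sub>v v"])
qed

lemma lmi_lyapunov_decrease:
  fixes G :: "real mat" and A P :: "nat \<Rightarrow> real mat" and N :: nat
  assumes G: "G \<in> carrier_mat d d" and A: "\<forall>k<N. A k \<in> carrier_mat d d"
    and P: "\<forall>k<N. P k \<in> carrier_mat d d"
    and LMI: "\<forall>k<N. psd (2 * d) (four_block_mat (b \<cdot>\<^sub>m P k) ((A k)\<^sup>T * G) (G\<^sup>T * A k) (G\<^sup>T + G - P k))"
    and w: "\<forall>k<N. 0 \<le> w k" "(\<Sum>k<N. w k) = 1" and u: "u \<in> carrier_vec d"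
  defines "A\<^sub>w \<equiv> mat_lincomb d d N w A" and "P\<^sub>w \<equiv> mat_lincomb d d N w P"
  shows "(A\<^sub>w *\<^sub>v u) \<bullet> (P\<^sub>w *\<^sub>v (A\<^sub>w *\<^sub>v u)) \<le> b * (u \<bullet> (P\<^sub>w *\<^sub>v u))"
proof -
  define y where "y = A\<^sub>w *\<^sub>v u"
  \<comment> \<open>With v = -y the G-terms cancel once the LMIs are averaged.\<close>
  define v where "v = (-1) \<cdot>\<^sub>v y"
  have y: "y \<in> carrier_vec d"
    unfolding y_def A\<^sub>w_def using u by (rule mult_mat_vec_carrier[OF mat_lincomb_carrier])
  then have v: "v \<in> carrier_vec d"
    by (simp add: v_def)
  have "0 \<le> b * (u \<bullet> (P k *\<^sub>v u)) + 2 * ((G *\<^sub>v v) \<bullet> (A k *\<^sub>v u))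
      + 2 * (v \<bullet> (G *\<^sub>v v)) - v \<bullet> (P k *\<^sub>v v)"
    if k: "k < N" for k
  proof -
    have "u @\<^sub>v v \<in> carrier_vec (2 * d)"
      using u v by (simp add: mult_2)
    with LMI k have "0 \<le> (u @\<^sub>v v) \<bullet>
        (four_block_mat (b \<cdot>\<^sub>m P k) ((A k)\<^sup>T * G) (G\<^sup>T * A k) (G\<^sup>T + G - P k) *\<^sub>v (u @\<^sub>v v))"
      unfolding psd_def by blast
    also have "\<dots> = b * (u \<bullet> (P k *\<^sub>v u)) + 2 * ((G *\<^sub>v v) \<bullet> (A k *\<^sub>v u))
        + 2 * (v \<bullet> (G *\<^sub>v v)) - v \<bullet> (P k *\<^sub>v v)"
      using A P G k u v by (intro four_block_lmi_quadratic_form) auto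
    finally show ?thesis .
  qed
  with w(1) have "0 \<le> (\<Sum>k<N. w k * (b * (u \<bullet> (P k *\<^sub>v u)) + 2 * ((G *\<^sub>v v) \<bullet> (A k *\<^sub>v u))
      + 2 * (v \<bullet> (G *\<^sub>v v)) - v \<bullet> (P k *\<^sub>v v)))"
    by (intro sum_nonneg) auto
  also have "\<dots> = b * (\<Sum>k<N. w k * (u \<bullet> (P k *\<^sub>v u))) + 2 * (\<Sum>k<N. w k * ((G *\<^sub>v v) \<bullet> (A k *\<^sub>v u)))
      + 2 * (v \<bullet> (G *\<^sub>v v)) * (\<Sum>k<N. w k) - (\<Sum>k<N. w k * (v \<bullet> (P k *\<^sub>v v)))"
    by (simp add: algebra_simps sum.distrib sum_subtractf sum_distrib_left sum_distrib_right)
  also have "\<dots> = b * (u \<bullet> (P\<^sub>w *\<^sub>v u)) + 2 * ((G *\<^sub>v v) \<bullet> y) + 2 * (v \<bullet> (G *\<^sub>v v)) - v \<bullet> (P\<^sub>w *\<^sub>v v)"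
    using A P G u v w(2)
    by (simp add: P\<^sub>w_def y_def A\<^sub>w_def scalar_prod_mat_lincomb_mult_vec)
  also have "\<dots> = b * (u \<bullet> (P\<^sub>w *\<^sub>v u)) - y \<bullet> (P\<^sub>w *\<^sub>v y)"
    using G y mult_mat_vec_carrier[OF mat_lincomb_carrier y]
    by (simp add: v_def P\<^sub>w_def mult_mat_vec[OF G] mult_mat_vec[of _ d d]
        comm_scalar_prod[of "G *\<^sub>v y" d y])
  finally show ?thesis
    by (simp add: y_def)
qed

lemma lyapunov_exponential_bound:
  fixes V :: "real vec \<Rightarrow> real" and A :: "real mat"
  assumes A: "A \<in> carrier_mat d d" and "0 < c" "0 \<le> \<beta>"
    and V_bounds: "\<And>y. y \<in> carrier_vec d \<Longrightarrow> c * (y \<bullet> y) \<le> V y \<and> V y \<le> C * (y \<bullet> y)"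
    and V_decrease: "\<And>y. y \<in> carrier_vec d \<Longrightarrow> V (A *\<^sub>v y) \<le> \<beta>\<^sup>2 * V y"
    and x0: "x 0 \<in> carrier_vec d" and x_Suc: "\<And>t. x (Suc t) = A *\<^sub>v x t"
  shows "enorm (x t) \<le> sqrt (C / c) * enorm (x 0) * \<beta> ^ t"
proof -
  have x: "x t \<in> carrier_vec d" for t
    by (induction t) (use x0 A x_Suc in auto)
  have V: "V (x t) \<le> (\<beta>\<^sup>2) ^ t * V (x 0)" for t
  proof (induction t)
    case (Suc t)
    have "V (x (Suc t)) \<le> \<beta>\<^sup>2 * V (x t)"
      using V_decrease[OF x] x_Suc by simp
    also have "\<dots> \<le> \<beta>\<^sup>2 * ((\<beta>\<^sup>2) ^ t * V (x 0))"
      using Suc by (intro mult_left_mono) auto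
    finally show ?case
      by simp
  qed simp
  have "c * (x t \<bullet> x t) \<le> V (x t)"
    using V_bounds[OF x] by blast
  also have "\<dots> \<le> (\<beta>\<^sup>2) ^ t * V (x 0)"
    by (rule V)
  also have "\<dots> \<le> (\<beta>\<^sup>2) ^ t * (C * (x 0 \<bullet> x 0))"
    using V_bounds[OF x0] by (intro mult_left_mono) auto
  finally have "x t \<bullet> x t \<le> (C / c) * (x 0 \<bullet> x 0) * (\<beta> ^ t)\<^sup>2"
    using \<open>0 < c\<close> by (simp add: field_simps power_mult[symmetric] power_mult_distrib mult.commute)
  then have "sqrt (x t \<bullet> x t) \<le> sqrt ((C / c) * (x 0 \<bullet> x 0) * (\<beta> ^ t)\<^sup>2)"
    by (rule real_sqrt_le_mono)
  also have "\<dots> = sqrt (C / c) * sqrt (x 0 \<bullet> x 0) * \<beta> ^ t"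
    using \<open>0 \<le> \<beta>\<close> by (simp only: real_sqrt_mult real_sqrt_abs abs_of_nonneg zero_le_power)
  finally show ?thesis
    unfolding enorm_def .
qed

lemma lmi_polytopic_exponential_stability:
  fixes G :: "real mat" and A P :: "nat \<Rightarrow> real mat" and N :: nat
  assumes G: "G \<in> carrier_mat d d" and A: "\<forall>k<N. A k \<in> carrier_mat d d"
    and P: "\<forall>k<N. pd d (P k)"
    and LMI: "\<forall>k<N. psd (2 * d) (four_block_mat (\<beta>\<^sup>2 \<cdot>\<^sub>m P k) ((A k)\<^sup>T * G) (G\<^sup>T * A k) (G\<^sup>T + G - P k))"
    and "0 \<le> \<beta>"
  shows "\<exists>\<alpha>>0. \<forall>w x. (\<forall>k<N. 0 \<le> w k) \<longrightarrow> (\<Sum>k<N. w k) = 1 \<longrightarrow> x 0 \<in> carrier_vec d \<longrightarrow>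
           (\<forall>t. x (Suc t) = mat_lincomb d d N w A *\<^sub>v x t) \<longrightarrow>
           (\<forall>t. enorm (x t) \<le> \<alpha> * enorm (x 0) * \<beta> ^ t)"
proof -
  have P_carrier: "\<forall>k<N. P k \<in> carrier_mat d d"
    using P by (simp add: pd_def)
  obtain c C where "0 < c" "0 < C" and P_bounds: "\<forall>k<N. \<forall>x \<in> carrier_vec d.
      c * (x \<bullet> x) \<le> x \<bullet> (P k *\<^sub>v x) \<and> x \<bullet> (P k *\<^sub>v x) \<le> C * (x \<bullet> x)"
    using pd_family_uniform_quadratic_form_bounds[OF P] by blast
  have "enorm (x t) \<le> sqrt (C / c) * enorm (x 0) * \<beta> ^ t"
    if w: "\<forall>k<N. 0 \<le> w k" "(\<Sum>k<N. w k) = 1" and x0: "x 0 \<in> carrier_vec d"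
      and x_Suc: "\<forall>t. x (Suc t) = mat_lincomb d d N w A *\<^sub>v x t" for w x t
  proof (rule lyapunov_exponential_bound[where V = "\<lambda>y. y \<bullet> (mat_lincomb d d N w P *\<^sub>v y)"])
    show "c * (y \<bullet> y) \<le> y \<bullet> (mat_lincomb d d N w P *\<^sub>v y)
        \<and> y \<bullet> (mat_lincomb d d N w P *\<^sub>v y) \<le> C * (y \<bullet> y)"
      if "y \<in> carrier_vec d" for y
      by (rule mat_lincomb_quadratic_form_bounds[OF P_carrier P_bounds w that])
    show "(mat_lincomb d d N w A *\<^sub>v y) \<bullet> (mat_lincomb d d N w P *\<^sub>v (mat_lincomb d d N w A *\<^sub>v y))
        \<le> \<beta>\<^sup>2 * (y \<bullet> (mat_lincomb d d N w P *\<^sub>v y))"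
      if "y \<in> carrier_vec d" for y
      by (rule lmi_lyapunov_decrease[OF G A P_carrier LMI w that])
  qed (use x0 x_Suc \<open>0 < c\<close> \<open>0 \<le> \<beta>\<close> in auto)
  with \<open>0 < c\<close> \<open>0 < C\<close> show ?thesis
    by (intro exI[of _ "sqrt (C / c)"]) auto
qed

lemma Fk_carrier_mat:
  assumes K: "K \<in> carrier_mat m n"
  shows "Fk n m M K \<in> carrier_mat (n\<^sup>2) (n\<^sup>2)"
proof -
  have "dim_row K = m" "dim_col K = n"
    using K by auto
  then have "Fab n m M * kron (1\<^sub>m n) K \<in> carrier_mat (n\<^sup>2) (n\<^sup>2)"
    "Fba n m M * kron K (1\<^sub>m n) \<in> carrier_mat (n\<^sup>2) (n\<^sup>2)"
    "Fbb n m M * kron K K \<in> carrier_mat (n\<^sup>2) (n\<^sup>2)"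
    unfolding Fab_def Fba_def Fbb_def kron_def carrier_mat_def by (simp_all add: power2_eq_square)
  moreover have "Faa n M \<in> carrier_mat (n\<^sup>2) (n\<^sup>2)"
    by (simp add: Faa_def)
  ultimately show ?thesis
    unfolding Fk_def by (intro add_carrier_mat minus_carrier_mat)
qed

lemma Cop_Fth_eq_mat_lincomb:
  assumes "Ee \<in> carrier_mat d (n\<^sup>2)" "D \<in> carrier_mat (n\<^sup>2) d" "K \<in> carrier_mat m n"
  shows "Cop Ee D (Fth n m N M \<theta> K) = mat_lincomb d d N (($) \<theta>) (\<lambda>k. Cop Ee D (Fk n m (M k) K))"
proof -
  have "Fth n m N M \<theta> K = mat_lincomb (n\<^sup>2) (n\<^sup>2) N (($) \<theta>) (\<lambda>k. Fk n m (M k) K)"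
    by (simp add: Fth_def mat_lincomb_def)
  with assms show ?thesis
    by (simp add: Cop_def mult_mat_lincomb Fk_carrier_mat)
qed

theorem theorem4:
  fixes n m N :: nat
    and M :: "nat \<Rightarrow> real mat"
    and Ee D K G :: "real mat"
    and P :: "nat \<Rightarrow> real mat"
    and S\<theta> :: "'s set" and \<phi> :: "'s \<Rightarrow> real vec"
    and \<beta> :: real
  assumes "0 < n" "0 < m" "0 < N"
    and M: "\<forall>k<N. M k \<in> carrier_mat (n * (n + m)) (n * (n + m)) \<and> symmetric_mat (M k)"
    and Ee: "Ee \<in> carrier_mat (n * (n + 1) div 2) (n^2)"
            "\<forall>X \<in> carrier_mat n n. Ee *\<^sub>v vecm X = vech X"
    and D: "D \<in> carrier_mat (n^2) (n * (n + 1) div 2)"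
           "\<forall>Y \<in> carrier_mat n n. symmetric_mat Y \<longrightarrow> D *\<^sub>v vech Y = vecm Y"
    and \<phi>: "\<forall>\<theta> \<in> S\<theta>. \<phi> \<theta> \<in> simplex N"
    and \<beta>: "0 < \<beta>" "\<beta> < 1"
    and K: "K \<in> carrier_mat m n"
    and G: "G \<in> carrier_mat (n * (n + 1) div 2) (n * (n + 1) div 2)"
    and P: "\<forall>k<N. pd (n * (n + 1) div 2) (P k)"
    and LMI: "\<forall>k<N. psd (2 * (n * (n + 1) div 2))
               (four_block_mat (\<beta>^2 \<cdot>\<^sub>m P k) ((Cop Ee D (Fk n m (M k) K))\<^sup>T * G)
                               (G\<^sup>T * Cop Ee D (Fk n m (M k) K)) (G\<^sup>T + G - P k))"
  shows "\<exists>\<alpha>>0. \<forall>\<theta>t \<in> \<phi> ` S\<theta>. \<forall>x :: nat \<Rightarrow> real vec.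
           x 0 \<in> carrier_vec (n * (n + 1) div 2) \<longrightarrow>
           (\<forall>t. x (Suc t) = Cop Ee D (Fth n m N M \<theta>t K) *\<^sub>v x t) \<longrightarrow>
           (\<forall>t. enorm (x t) \<le> \<alpha> * enorm (x 0) * \<beta> ^ t)"
proof -
  let ?d = "n * (n + 1) div 2"
  define A where "A = (\<lambda>k. Cop Ee D (Fk n m (M k) K))"
  have "\<forall>k<N. A k \<in> carrier_mat ?d ?d"
    using Ee(1) D(1) Fk_carrier_mat[OF K] by (auto simp: A_def Cop_def)
  moreover have "\<forall>k<N. psd (2 * ?d)
      (four_block_mat (\<beta>\<^sup>2 \<cdot>\<^sub>m P k) ((A k)\<^sup>T * G) (G\<^sup>T * A k) (G\<^sup>T + G - P k))"
    unfolding A_def by (rule LMI)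
  ultimately obtain \<alpha> where "0 < \<alpha>" and stable: "\<forall>w x. (\<forall>k<N. 0 \<le> w k) \<longrightarrow> (\<Sum>k<N. w k) = 1 \<longrightarrow>
      x 0 \<in> carrier_vec ?d \<longrightarrow> (\<forall>t. x (Suc t) = mat_lincomb ?d ?d N w A *\<^sub>v x t) \<longrightarrow>
      (\<forall>t. enorm (x t) \<le> \<alpha> * enorm (x 0) * \<beta> ^ t)"
    using lmi_polytopic_exponential_stability[OF G _ P] \<beta>(1) by (metis less_imp_le)
  have "Cop Ee D (Fth n m N M \<theta> K) = mat_lincomb ?d ?d N (($) \<theta>) A" for \<theta>
    unfolding A_def using Ee(1) D(1) K by (rule Cop_Fth_eq_mat_lincomb)
  with stable \<phi> \<open>0 < \<alpha>\<close> show ?thesis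
    by (intro exI[of _ \<alpha>]) (auto simp: simplex_def)
qed

end
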